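(* Let $\Gamma=(G,\sigma)$ be a signed graph with girth $g$ and let $C_g^\sigma$ be a shortest cycle of $\Gamma$. If $i_-(\Gamma)=i_-(C_g^\sigma)$, then $N_r(C_g^\sigma)=\emptyset$ for every integer $r\ge 2$.
   Context: A signed graph $\Gamma=(G,\sigma)$ is a simple graph $G$ with a sign function $\sigma:E(G)\to\{+,-\}$. Its adjacency matrix $A(\Gamma)$ has $(u,v)$-entry $\sigma(uv)$ if $uv\in E(G)$ and $0$ otherwise; $i_+(\Gamma)$, $i_-(\Gamma)$, $\eta(\Gamma)$ denote the numbers of positive, negative and zero eigenvalues of $A(\Gamma)$. A cycle $C_g^\sigma$ of $\Gamma$ is regarded as a signed graph with the restricted signs. The girth $g$ is the length of a shortest cycle. For a cycle $C$ of $\Gamma$ and a positive integer $r$, $N_r(C)$ denotes the set of vertices $v\in V(\Gamma)\setminus V(C)$ whose distance to $V(C)$ (the minimum over $x\in V(C)$ of the length of a shortest $v$–$x$ path) equals $r$. *)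

theory Defs
  imports "Jordan_Normal_Form.Char_Poly"
begin

(* A signed graph: finite vertex set V (of naturals), symmetric irreflexive
   edge relation E on V, sign sigma u v (True = +, False = -), symmetric. *)
definition signed_graph :: "nat set \<Rightarrow> (nat \<Rightarrow> nat \<Rightarrow> bool) \<Rightarrow> (nat \<Rightarrow> nat \<Rightarrow> bool) \<Rightarrow> bool" where
  "signed_graph V E \<sigma> \<longleftrightarrow> finite V
     \<and> (\<forall>u v. E u v \<longrightarrow> u \<in> V \<and> v \<in> V)
     \<and> (\<forall>u v. E u v \<longrightarrow> E v u)
     \<and> (\<forall>u. \<not> E u u)
     \<and> (\<forall>u v. E u v \<longrightarrow> \<sigma> u v = \<sigma> v u)"

definition adj_mat :: "nat set \<Rightarrow> (nat \<Rightarrow> nat \<Rightarrow> bool) \<Rightarrow> (nat \<Rightarrow> nat \<Rightarrow> bool) \<Rightarrow> real mat" where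
  "adj_mat V E \<sigma> = mat (card V) (card V) (\<lambda>(i, j).
     let u = sorted_list_of_set V ! i; v = sorted_list_of_set V ! j in
     if E u v then (if \<sigma> u v then 1 else -1) else 0)"

definition neg_index :: "real mat \<Rightarrow> nat" where
  "neg_index A = (\<Sum>x\<in>{x. x < 0 \<and> poly (char_poly A) x = 0}. order x (char_poly A))"

definition i_minus :: "nat set \<Rightarrow> (nat \<Rightarrow> nat \<Rightarrow> bool) \<Rightarrow> (nat \<Rightarrow> nat \<Rightarrow> bool) \<Rightarrow> nat" where
  "i_minus V E \<sigma> = neg_index (adj_mat V E \<sigma>)"

definition is_cycle :: "(nat \<Rightarrow> nat \<Rightarrow> bool) \<Rightarrow> nat list \<Rightarrow> bool" where
  "is_cycle E cs \<longleftrightarrow> length cs \<ge> 3 \<and> distinct cs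
     \<and> (\<forall>i < length cs. E (cs ! i) (cs ! ((i + 1) mod length cs)))"

definition cycle_edge :: "nat list \<Rightarrow> nat \<Rightarrow> nat \<Rightarrow> bool" where
  "cycle_edge cs u v \<longleftrightarrow> (\<exists>i < length cs.
     (u = cs ! i \<and> v = cs ! ((i + 1) mod length cs)) \<or>
     (v = cs ! i \<and> u = cs ! ((i + 1) mod length cs)))"

(* a shortest cycle: its length is the girth *)
definition shortest_cycle :: "(nat \<Rightarrow> nat \<Rightarrow> bool) \<Rightarrow> nat list \<Rightarrow> bool" where
  "shortest_cycle E cs \<longleftrightarrow> is_cycle E cs \<and> (\<forall>ds. is_cycle E ds \<longrightarrow> length cs \<le> length ds)"

definition walk :: "(nat \<Rightarrow> nat \<Rightarrow> bool) \<Rightarrow> nat list \<Rightarrow> bool" where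
  "walk E xs \<longleftrightarrow> xs \<noteq> [] \<and> (\<forall>i. Suc i < length xs \<longrightarrow> E (xs ! i) (xs ! Suc i))"

(* v reaches the set S by a walk with exactly k edges *)
definition reach_in :: "(nat \<Rightarrow> nat \<Rightarrow> bool) \<Rightarrow> nat \<Rightarrow> nat \<Rightarrow> nat set \<Rightarrow> bool" where
  "reach_in E k v S \<longleftrightarrow> (\<exists>xs. walk E xs \<and> length xs = Suc k \<and> hd xs = v \<and> last xs \<in> S)"

definition dist_to_set_eq :: "(nat \<Rightarrow> nat \<Rightarrow> bool) \<Rightarrow> nat \<Rightarrow> nat set \<Rightarrow> nat \<Rightarrow> bool" where
  "dist_to_set_eq E v S r \<longleftrightarrow> reach_in E r v S \<and> (\<forall>k < r. \<not> reach_in E k v S)"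

definition N_r :: "nat set \<Rightarrow> (nat \<Rightarrow> nat \<Rightarrow> bool) \<Rightarrow> nat list \<Rightarrow> nat \<Rightarrow> nat set" where
  "N_r V E cs r = {v \<in> V - set cs. dist_to_set_eq E v (set cs) r}"

end

theory Submission
  imports Defs "Jordan_Normal_Form.Schur_Decomposition"
begin

(* The negative index of a real symmetric matrix is the largest dimension of a subspace on
   which its quadratic form is negative definite (Sylvester's law of inertia, obtained here from
   the spectral theorem). For signed graphs this number cannot decrease when passing from an
   induced subgraph to the whole graph, and it increases by one when an edge ab is attached
   whose end a has no other neighbour in the subgraph.
   A shortest cycle C is chordless, so it is the subgraph induced by its vertices. A vertex at
   distance r >= 2 from C has a shortest path to C whose vertices a, b at distance 2 and 1 form
   such an edge; then i_-(Gamma) >= i_-(C + ab) = i_-(C) + 1, contradicting the hypothesis. *)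

section \<open>Orthonormal diagonalization of real symmetric matrices\<close>

definition orthonormal_mat :: "nat \<Rightarrow> real mat \<Rightarrow> bool" where
  "orthonormal_mat n P \<longleftrightarrow> P \<in> carrier_mat n n \<and> transpose_mat P * P = 1\<^sub>m n"

lemma orthonormal_mat_right_inverse:
  assumes "orthonormal_mat n P"
  shows "P * transpose_mat P = 1\<^sub>m n"
  using assms mat_mult_left_right_inverse[of "transpose_mat P" n P]
  unfolding orthonormal_mat_def by auto

lemma orthonormal_mat_mult:
  assumes P: "orthonormal_mat n P" and Q: "orthonormal_mat n Q"
  shows "orthonormal_mat n (P * Q)"
proof -
  have Pc: "P \<in> carrier_mat n n" and Qc: "Q \<in> carrier_mat n n"
    using P Q unfolding orthonormal_mat_def by auto
  have "transpose_mat (P * Q) * (P * Q) = transpose_mat Q * (transpose_mat P * P) * Q"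
    using Pc Qc by (simp add: transpose_mult assoc_mult_mat[of _ n n _ n _ n])
  also have "\<dots> = 1\<^sub>m n" using P Q Qc unfolding orthonormal_mat_def by simp
  finally show ?thesis using Pc Qc unfolding orthonormal_mat_def by simp
qed

lemma orthonormal_mat_block:
  assumes P: "orthonormal_mat m P"
  shows "orthonormal_mat (Suc m) (four_block_mat (1\<^sub>m 1) (0\<^sub>m 1 m) (0\<^sub>m m 1) P)"
proof -
  have Pc: "P \<in> carrier_mat m m" and PTP: "transpose_mat P * P = 1\<^sub>m m"
    using P unfolding orthonormal_mat_def by auto
  have "transpose_mat (four_block_mat (1\<^sub>m 1) (0\<^sub>m 1 m) (0\<^sub>m m 1) P)
      * four_block_mat (1\<^sub>m 1) (0\<^sub>m 1 m) (0\<^sub>m m 1) P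
      = four_block_mat (1\<^sub>m 1) (0\<^sub>m 1 m) (0\<^sub>m m 1) (transpose_mat P)
      * four_block_mat (1\<^sub>m 1) (0\<^sub>m 1 m) (0\<^sub>m m 1) P"
    using Pc by (subst transpose_four_block_mat, auto)
  also have "\<dots> = 1\<^sub>m (Suc m)"
    using Pc PTP by (subst mult_four_block_mat[where ?nr1.0=1 and ?n1.0=1 and ?n2.0=m and ?nr2.0=m
          and ?nc1.0=1 and ?nc2.0=m], auto)
  finally show ?thesis using Pc unfolding orthonormal_mat_def by auto
qed

lemma real_symmetric_complex_eigenvalue_real:
  fixes A :: "real mat"
  assumes A: "A \<in> carrier_mat n n" and sym: "transpose_mat A = A"
    and v: "v \<in> carrier_vec n" "v \<noteq> 0\<^sub>v n"
    and ev: "map_mat complex_of_real A *\<^sub>v v = z \<cdot>\<^sub>v v"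
  shows "Im z = 0"
proof -
  have Aij: "A $$ (i,j) = A $$ (j,i)" if "i < n" "j < n" for i j
    using sym A that by (metis carrier_matD(1,2) index_transpose_mat(1))
  have entry: "(\<Sum>j<n. complex_of_real (A $$ (i,j)) * v $ j) = z * v $ i" if i: "i < n" for i
  proof -
    have "(map_mat complex_of_real A *\<^sub>v v) $ i = (z \<cdot>\<^sub>v v) $ i" using ev by simp
    thus ?thesis using i A v by (auto simp: scalar_prod_def atLeast0LessThan)
  qed
  \<comment> \<open>The Hermitian form \<open>v\<^sup>* A v\<close> is both real and equal to \<open>z \<parallel>v\<parallel>\<^sup>2\<close>.\<close>
  define s where "s = (\<Sum>i<n. cnj (v $ i) * (\<Sum>j<n. complex_of_real (A $$ (i,j)) * v $ j))"
  define N where "N = (\<Sum>i<n. (cmod (v $ i))\<^sup>2)"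
  have s_eq: "s = z * complex_of_real N"
  proof -
    have "cnj x * x = complex_of_real ((cmod x)\<^sup>2)" for x
      using complex_norm_square[of x] by (simp add: mult.commute)
    then have "s = (\<Sum>i<n. z * complex_of_real ((cmod (v $ i))\<^sup>2))" unfolding s_def
      by (intro sum.cong) (auto simp: entry)
    thus ?thesis unfolding N_def by (simp add: sum_distrib_left)
  qed
  have s_real: "cnj s = s"
  proof -
    have "cnj s = (\<Sum>i<n. \<Sum>j<n. v $ i * complex_of_real (A $$ (i,j)) * cnj (v $ j))"
      unfolding s_def by (simp add: sum_distrib_left mult_ac)
    also have "\<dots> = (\<Sum>j<n. \<Sum>i<n. v $ i * complex_of_real (A $$ (i,j)) * cnj (v $ j))"
      by (rule sum.swap)
    also have "\<dots> = s" unfolding s_def sum_distrib_left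
      by (rule sum.cong[OF refl], rule sum.cong[OF refl], auto simp: Aij mult_ac)
    finally show ?thesis .
  qed
  have "N > 0"
  proof -
    obtain i where i: "i < n" "v $ i \<noteq> 0"
      using v by (metis carrier_vecD eq_vecI index_zero_vec(1,2))
    have "(cmod (v $ i))\<^sup>2 \<le> N" unfolding N_def by (rule member_le_sum, use i in auto)
    moreover have "(cmod (v $ i))\<^sup>2 > 0" using i by simp
    ultimately show ?thesis by linarith
  qed
  moreover have "cnj z * complex_of_real N = z * complex_of_real N"
    using s_eq s_real by (metis complex_cnj_complex_of_real complex_cnj_mult)
  ultimately have "cnj z = z" by simp
  then have "Im (cnj z) = Im z" by simp
  then show ?thesis by simp
qed

lemma real_symmetric_eigenvector:
  fixes A :: "real mat"
  assumes A: "A \<in> carrier_mat n n" and sym: "transpose_mat A = A" and n: "n > 0"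
  obtains \<mu> v where "v \<in> carrier_vec n" "v \<noteq> 0\<^sub>v n" "A *\<^sub>v v = \<mu> \<cdot>\<^sub>v v"
proof -
  define Ac where "Ac = map_mat complex_of_real A"
  have Ac: "Ac \<in> carrier_mat n n" using A by (simp add: Ac_def)
  have "degree (char_poly Ac) = n" using degree_monic_char_poly[OF Ac] by simp
  hence "\<not> constant (poly (char_poly Ac))" using n by (simp add: constant_degree)
  then obtain z where "poly (char_poly Ac) z = 0" using fundamental_theorem_of_algebra by blast
  hence "eigenvalue Ac z" using eigenvalue_root_char_poly[OF Ac] by simp
  then obtain vc where "eigenvector Ac vc z" unfolding eigenvalue_def by blast
  then have vc: "vc \<in> carrier_vec n" "vc \<noteq> 0\<^sub>v n" and evq: "Ac *\<^sub>v vc = z \<cdot>\<^sub>v vc"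
    using Ac unfolding eigenvector_def by auto
  have imz: "Im z = 0"
    using real_symmetric_complex_eigenvalue_real[OF A sym vc] evq unfolding Ac_def .
  \<comment> \<open>Since \<open>z\<close> is real, the real and imaginary parts of \<open>vc\<close> are eigenvectors,
    and one of them is nonzero.\<close>
  define vr where "vr = vec n (\<lambda>i. Re (vc $ i))"
  define vi where "vi = vec n (\<lambda>i. Im (vc $ i))"
  have entry: "(\<Sum>j<n. complex_of_real (A $$ (i,j)) * vc $ j) = z * vc $ i" if i: "i < n" for i
  proof -
    have "(Ac *\<^sub>v vc) $ i = (z \<cdot>\<^sub>v vc) $ i" using evq by simp
    thus ?thesis using i A vc unfolding Ac_def by (auto simp: scalar_prod_def atLeast0LessThan)
  qed
  have "A *\<^sub>v vr = Re z \<cdot>\<^sub>v vr"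
  proof (rule eq_vecI)
    fix i assume "i < dim_vec (Re z \<cdot>\<^sub>v vr)"
    hence i: "i < n" by (simp add: vr_def)
    have "Re (\<Sum>j<n. complex_of_real (A $$ (i,j)) * vc $ j) = Re (z * vc $ i)" using entry[OF i] by simp
    thus "(A *\<^sub>v vr) $ i = (Re z \<cdot>\<^sub>v vr) $ i" using i A imz
      by (simp add: vr_def scalar_prod_def atLeast0LessThan Re_sum)
  qed (use A in \<open>simp add: vr_def\<close>)
  moreover have "A *\<^sub>v vi = Re z \<cdot>\<^sub>v vi"
  proof (rule eq_vecI)
    fix i assume "i < dim_vec (Re z \<cdot>\<^sub>v vi)"
    hence i: "i < n" by (simp add: vi_def)
    have "Im (\<Sum>j<n. complex_of_real (A $$ (i,j)) * vc $ j) = Im (z * vc $ i)" using entry[OF i] by simp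
    thus "(A *\<^sub>v vi) $ i = (Re z \<cdot>\<^sub>v vi) $ i" using i A imz
      by (simp add: vi_def scalar_prod_def atLeast0LessThan Im_sum)
  qed (use A in \<open>simp add: vi_def\<close>)
  moreover have "vr \<noteq> 0\<^sub>v n \<or> vi \<noteq> 0\<^sub>v n"
  proof (rule ccontr)
    assume "\<not> ?thesis"
    hence "Re (vc $ i) = 0 \<and> Im (vc $ i) = 0" if "i < n" for i
      using that unfolding vr_def vi_def by (metis index_vec index_zero_vec(1))
    hence "vc = 0\<^sub>v n" using vc by (intro eq_vecI, auto simp: complex.expand)
    thus False using vc by simp
  qed
  moreover have "vr \<in> carrier_vec n" "vi \<in> carrier_vec n" by (auto simp: vr_def vi_def)
  ultimately show ?thesis using that by blast
qed


lemma orthonormal_basis_completion: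
  fixes v :: "real vec"
  assumes v: "v \<in> carrier_vec n" and v1: "v \<bullet> v = 1"
  obtains W where "orthonormal_mat n W" "col W 0 = v"
proof -
  interpret cof_vec_space n "TYPE(real)" .
  have v0: "v \<noteq> 0\<^sub>v n" using v1 v by auto
  have n: "n > 0" using v0 v by (metis carrier_vecD neq0_conv vec_of_dim_0)
  define b where "b = basis_completion v"
  define ws where "ws = gram_schmidt n b"
  from basis_completion[OF v v0, folded b_def]
  have dist_b: "distinct b" and indep: "\<not> lin_dep (set b)" and b: "set b \<subseteq> carrier_vec n"
    and hdb: "hd b = v" and len_b: "length b = n" by auto
  from hdb len_b n obtain vs where bv: "b = v # vs" by (cases b, auto)
  from gram_schmidt_result[OF b dist_b indep refl, folded ws_def]
  have ws: "set ws \<subseteq> carrier_vec n" "corthogonal ws" "length ws = n" by (auto simp: len_b)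
  from gram_schmidt_hd[OF v, of vs, folded bv] have hdws: "hd ws = v" unfolding ws_def .
  define us where "us = map (\<lambda>w. (1 / sqrt (w \<bullet> w)) \<cdot>\<^sub>v w) ws"
  have lus: "length us = n" using ws by (simp add: us_def)
  have usc: "set us \<subseteq> carrier_vec n" using ws by (auto simp: us_def)
  have wsc: "ws ! i \<in> carrier_vec n" if "i < n" for i using ws that by auto
  have pos: "ws ! i \<bullet> ws ! i > 0" if i: "i < n" for i
  proof -
    have "ws ! i \<bullet> ws ! i \<noteq> 0" using corthogonalD[OF ws(2), of i i] i ws by auto
    moreover have "ws ! i \<bullet> ws ! i \<ge> 0" using conjugate_square_ge_0_vec[of "ws ! i"] by simp
    ultimately show ?thesis by simp
  qed
  have ortho: "us ! i \<bullet> us ! j = (if i = j then 1 else 0)" if i: "i < n" and j: "j < n" for i j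
  proof -
    have "us ! i \<bullet> us ! j = (1 / sqrt (ws!i \<bullet> ws!i)) * (1 / sqrt (ws!j \<bullet> ws!j)) * (ws ! i \<bullet> ws ! j)"
      using i j ws wsc[OF i] wsc[OF j] by (simp add: us_def)
    also have "\<dots> = (if i = j then 1 else 0)"
    proof (cases "i = j")
      case True
      have "sqrt (ws!i \<bullet> ws!i) * sqrt (ws!i \<bullet> ws!i) = ws!i \<bullet> ws!i" using pos[OF i] by simp
      then show ?thesis using True pos[OF i] by (simp add: field_simps)
    next
      case False
      then show ?thesis using corthogonalD[OF ws(2), of i j] i j ws by auto
    qed
    finally show ?thesis .
  qed
  define W where "W = mat_of_cols n us"
  have W: "W \<in> carrier_mat n n" unfolding W_def using lus mat_of_cols_carrier(1)[of n us] by simp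
  have colW: "col W i = us ! i" if "i < n" for i
    unfolding W_def using lus usc that by (intro col_mat_of_cols, auto)
  have "transpose_mat W * W = 1\<^sub>m n" by (rule eq_matI, use W in \<open>auto simp: colW ortho\<close>)
  then have "orthonormal_mat n W" using W unfolding orthonormal_mat_def by simp
  moreover have "ws ! 0 = v" using hdws n ws by (metis hd_conv_nth list.size(3) not_less0)
  then have "col W 0 = v" using colW[OF n] v1 n ws unfolding us_def by simp
  ultimately show ?thesis using that by blast
qed

lemma orthonormal_conj_eigenvector_block:
  fixes A :: "real mat"
  assumes A: "A \<in> carrier_mat (Suc m) (Suc m)" and sym: "transpose_mat A = A"
    and W: "orthonormal_mat (Suc m) W" and W0: "col W 0 = u" and Au: "A *\<^sub>v u = \<mu> \<cdot>\<^sub>v u"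
  obtains A3 where "A3 \<in> carrier_mat m m" "transpose_mat A3 = A3"
    "transpose_mat W * A * W = four_block_mat (mat 1 1 (\<lambda>_. \<mu>)) (0\<^sub>m 1 m) (0\<^sub>m m 1) A3"
proof -
  have Wc: "W \<in> carrier_mat (Suc m) (Suc m)" and WTW: "transpose_mat W * W = 1\<^sub>m (Suc m)"
    using W unfolding orthonormal_mat_def by auto
  define A' where "A' = transpose_mat W * A * W"
  have A': "A' \<in> carrier_mat (Suc m) (Suc m)" using Wc A unfolding A'_def by auto
  have A'sym: "transpose_mat A' = A'"
  proof -
    have WA: "transpose_mat W * A \<in> carrier_mat (Suc m) (Suc m)" using Wc A by auto
    have "transpose_mat A' = transpose_mat W * transpose_mat (transpose_mat W * A)"
      unfolding A'_def by (rule transpose_mult[OF WA Wc])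
    also have "transpose_mat (transpose_mat W * A) = transpose_mat A * W"
      using transpose_mult[of "transpose_mat W" "Suc m" "Suc m" A "Suc m"] Wc A by simp
    finally show ?thesis unfolding A'_def using sym Wc A
      by (simp add: assoc_mult_mat[of _ "Suc m" "Suc m" _ "Suc m" _ "Suc m"])
  qed
  have colA': "A' $$ (i,0) = (if i = 0 then \<mu> else 0)" if i: "i < Suc m" for i
  proof -
    have "A' $$ (i,0) = row (transpose_mat W) i \<bullet> col (A * W) 0"
      unfolding A'_def using Wc A i
      by (subst assoc_mult_mat[of _ "Suc m" "Suc m" _ "Suc m" _ "Suc m"], auto)
    also have "col (A * W) 0 = A *\<^sub>v col W 0" using A Wc by auto
    also have "\<dots> = \<mu> \<cdot>\<^sub>v u" using W0 Au by simp
    also have "row (transpose_mat W) i \<bullet> (\<mu> \<cdot>\<^sub>v u) = \<mu> * (col W i \<bullet> col W 0)"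
      using Wc i W0 by auto
    also have "col W i \<bullet> col W 0 = (transpose_mat W * W) $$ (i,0)" using Wc i by auto
    finally show ?thesis using WTW i by auto
  qed
  have rowA': "A' $$ (0,j) = (if j = 0 then \<mu> else 0)" if j: "j < Suc m" for j
    using colA'[OF j] A'sym j A' by (metis carrier_matD(1,2) index_transpose_mat(1) zero_less_Suc)
  define A3 where "A3 = mat m m (\<lambda>(i,j). A' $$ (Suc i, Suc j))"
  have "A3 \<in> carrier_mat m m" unfolding A3_def by auto
  moreover have "transpose_mat A3 = A3"
    unfolding A3_def using A'sym A'
    by (intro eq_matI, auto, metis Suc_less_eq carrier_matD(1,2) index_transpose_mat(1))
  moreover have "A' = four_block_mat (mat 1 1 (\<lambda>_. \<mu>)) (0\<^sub>m 1 m) (0\<^sub>m m 1) A3"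
  proof (rule eq_matI)
    fix i j assume "i < dim_row (four_block_mat (mat 1 1 (\<lambda>_. \<mu>)) (0\<^sub>m 1 m) (0\<^sub>m m 1) A3)"
      and "j < dim_col (four_block_mat (mat 1 1 (\<lambda>_. \<mu>)) (0\<^sub>m 1 m) (0\<^sub>m m 1) A3)"
    then have i: "i < Suc m" and j: "j < Suc m" by (auto simp: A3_def)
    show "A' $$ (i, j) = four_block_mat (mat 1 1 (\<lambda>_. \<mu>)) (0\<^sub>m 1 m) (0\<^sub>m m 1) A3 $$ (i, j)"
      using i j colA'[OF i] rowA'[OF j] by (cases i; cases j; auto simp: A3_def)
  qed (use A' in \<open>auto simp: A3_def\<close>)
  ultimately show ?thesis using that unfolding A'_def by blast
qed

theorem real_symmetric_orthonormal_diagonalization: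
  fixes A :: "real mat"
  assumes "A \<in> carrier_mat n n" and "transpose_mat A = A"
  obtains P D where "orthonormal_mat n P" "D \<in> carrier_mat n n" "diagonal_mat D"
    "A = P * D * transpose_mat P"
  using assms
proof (induction n arbitrary: A thesis)
  case 0
  show ?case
    by (rule "0.prems"(1)[of "1\<^sub>m 0" A], use "0.prems" in \<open>auto simp: diagonal_mat_def orthonormal_mat_def\<close>)
next
  case (Suc m)
  note A = Suc.prems(2) and sym = Suc.prems(3)
  obtain \<mu> v where v: "v \<in> carrier_vec (Suc m)" "v \<noteq> 0\<^sub>v (Suc m)" "A *\<^sub>v v = \<mu> \<cdot>\<^sub>v v"
    using real_symmetric_eigenvector[OF A sym zero_less_Suc] by blast
  have vv: "v \<bullet> v > 0"
  proof -
    have "v \<bullet> v \<noteq> 0" using v conjugate_square_eq_0_vec[of v] by auto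
    moreover have "v \<bullet> v \<ge> 0" using conjugate_square_ge_0_vec[of v] by simp
    ultimately show ?thesis by simp
  qed
  define u where "u = (1 / sqrt (v \<bullet> v)) \<cdot>\<^sub>v v"
  have u: "u \<in> carrier_vec (Suc m)" using v by (simp add: u_def)
  have u1: "u \<bullet> u = 1" using v vv unfolding u_def by (simp add: field_simps)
  have Au: "A *\<^sub>v u = \<mu> \<cdot>\<^sub>v u" using v A unfolding u_def
    by (simp add: mult_mat_vec smult_smult_assoc mult.commute)
  obtain W where W: "orthonormal_mat (Suc m) W" and W0: "col W 0 = u"
    using orthonormal_basis_completion[OF u u1] by blast
  have Wc: "W \<in> carrier_mat (Suc m) (Suc m)" using W unfolding orthonormal_mat_def by simp
  define M1 where "M1 = mat 1 1 (\<lambda>_. \<mu>)"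
  obtain A3 where A3: "A3 \<in> carrier_mat m m" "transpose_mat A3 = A3"
    and WAW: "transpose_mat W * A * W = four_block_mat M1 (0\<^sub>m 1 m) (0\<^sub>m m 1) A3"
    using orthonormal_conj_eigenvector_block[OF A sym W W0 Au] unfolding M1_def by blast
  obtain P' D' where P': "orthonormal_mat m P'" and D': "D' \<in> carrier_mat m m" "diagonal_mat D'"
    and A3eq: "A3 = P' * D' * transpose_mat P'"
    using Suc.IH[OF _ A3] by blast
  have P'c: "P' \<in> carrier_mat m m" using P' unfolding orthonormal_mat_def by simp
  have M1: "M1 \<in> carrier_mat 1 1" unfolding M1_def by auto
  define B where "B = four_block_mat (1\<^sub>m 1) (0\<^sub>m 1 m) (0\<^sub>m m 1) P'"
  define D where "D = four_block_mat M1 (0\<^sub>m 1 m) (0\<^sub>m m 1) D'"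
  have B: "orthonormal_mat (Suc m) B" unfolding B_def by (rule orthonormal_mat_block[OF P'])
  have Bc: "B \<in> carrier_mat (Suc m) (Suc m)" using B unfolding orthonormal_mat_def by simp
  have D: "D \<in> carrier_mat (Suc m) (Suc m)" "diagonal_mat D"
    unfolding D_def using D' M1 by (auto simp: M1_def diagonal_mat_def)
  have BDBT: "B * D * transpose_mat B = transpose_mat W * A * W"
  proof -
    have BT: "transpose_mat B = four_block_mat (1\<^sub>m 1) (0\<^sub>m 1 m) (0\<^sub>m m 1) (transpose_mat P')"
      unfolding B_def using P'c by (subst transpose_four_block_mat, auto)
    have "B * D = four_block_mat M1 (0\<^sub>m 1 m) (0\<^sub>m m 1) (P' * D')"
      unfolding B_def D_def using P'c D' M1
      by (subst mult_four_block_mat[where ?nr1.0=1 and ?n1.0=1 and ?n2.0=m and ?nr2.0=m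
            and ?nc1.0=1 and ?nc2.0=m], auto)
    also have "\<dots> * transpose_mat B = four_block_mat M1 (0\<^sub>m 1 m) (0\<^sub>m m 1) (P' * D' * transpose_mat P')"
      unfolding BT using P'c D' M1
      by (subst mult_four_block_mat[where ?nr1.0=1 and ?n1.0=1 and ?n2.0=m and ?nr2.0=m
            and ?nc1.0=1 and ?nc2.0=m], auto)
    finally show ?thesis using WAW A3eq by simp
  qed
  have "W * B * D * transpose_mat (W * B) = W * (B * D * transpose_mat B) * transpose_mat W"
    using Wc Bc D by (simp add: transpose_mult assoc_mult_mat[of _ "Suc m" "Suc m" _ "Suc m" _ "Suc m"])
  also have "\<dots> = (W * transpose_mat W) * A * (W * transpose_mat W)"
    unfolding BDBT using Wc A by (simp add: assoc_mult_mat[of _ "Suc m" "Suc m" _ "Suc m" _ "Suc m"])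
  also have "\<dots> = A" using orthonormal_mat_right_inverse[OF W] A by simp
  finally show ?case using Suc.prems(1) orthonormal_mat_mult[OF W B] D by metis
qed

section \<open>The negative index as a maximal dimension\<close>

lemma order_prod_linear_factors:
  "Polynomial.order (x :: 'a :: idom) (\<Prod>a\<leftarrow>ds. [:- a, 1:]) = count_list ds x"
proof (induction ds)
  case (Cons a ds)
  have "(\<Prod>a\<leftarrow>ds. [:- a, 1:]) \<noteq> (0 :: 'a poly)" by (auto simp: prod_list_zero_iff)
  then have "Polynomial.order x ([:- a, 1:] * (\<Prod>a\<leftarrow>ds. [:- a, 1:]))
      = Polynomial.order x [:- a, 1:] + Polynomial.order x (\<Prod>a\<leftarrow>ds. [:- a, 1:])"
    by (metis mult_eq_0_iff order_mult pCons_eq_0_iff zero_neq_one)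
  then show ?case using Cons by (auto simp: order_linear')
qed (simp add: order_0I)

lemma sum_count_list_eq_length_filter:
  "finite R \<Longrightarrow> (\<Sum>x\<in>R. count_list ds x) = length (filter (\<lambda>a. a \<in> R) ds)"
proof (induction ds)
  case (Cons a ds)
  have "(\<Sum>x\<in>R. count_list (a # ds) x) = (\<Sum>x\<in>R. count_list ds x) + (\<Sum>x\<in>R. if a = x then 1 else 0)"
    by (subst sum.distrib[symmetric], rule sum.cong, auto)
  also have "(\<Sum>x\<in>R. if a = x then 1 else 0) = (if a \<in> R then 1 else (0::nat))"
    using Cons.prems by (simp add: sum.delta)
  finally show ?case using Cons by simp
qed simp

lemma neg_index_orthonormal_diagonal:
  fixes D :: "real mat"
  assumes P: "orthonormal_mat n P" and D: "D \<in> carrier_mat n n" "diagonal_mat D"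
    and A: "A = P * D * transpose_mat P"
  shows "neg_index A = card {i. i < n \<and> D $$ (i,i) < 0}"
proof -
  have Pc: "P \<in> carrier_mat n n" and "transpose_mat P * P = 1\<^sub>m n"
    using P unfolding orthonormal_mat_def by auto
  then have "similar_mat_wit A D P (transpose_mat P)"
    unfolding similar_mat_wit_def Let_def
    using A D orthonormal_mat_right_inverse[OF P] by auto
  hence "char_poly A = char_poly D" by (intro char_poly_similar, auto simp: similar_mat_def)
  also have "char_poly D = (\<Prod>a\<leftarrow>diag_mat D. [:- a, 1:])"
    by (rule char_poly_upper_triangular[OF D(1)])
      (use D in \<open>auto simp: upper_triangular_def diagonal_mat_def\<close>)
  finally have cp: "char_poly A = (\<Prod>a\<leftarrow>diag_mat D. [:- a, 1:])" .
  define ds where "ds = diag_mat D"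
  have ds: "ds = map (\<lambda>i. D $$ (i,i)) [0..<n]" unfolding ds_def diag_mat_def using D by auto
  have roots: "poly (char_poly A) x = 0 \<longleftrightarrow> x \<in> set ds" for x
    unfolding cp ds_def[symmetric] by (induction ds, auto)
  define R where "R = {x. x < 0 \<and> x \<in> set ds}"
  have "neg_index A = (\<Sum>x\<in>R. Polynomial.order x (char_poly A))"
    unfolding neg_index_def R_def roots ..
  also have "\<dots> = length (filter (\<lambda>a. a \<in> R) ds)"
    unfolding cp ds_def[symmetric] order_prod_linear_factors
    by (rule sum_count_list_eq_length_filter) (simp add: R_def)
  also have "filter (\<lambda>a. a \<in> R) ds = filter (\<lambda>a. a < 0) ds"
    unfolding R_def by (rule filter_cong, auto)
  also have "length (filter (\<lambda>a. a < 0) ds) = card {i. i < n \<and> D $$ (i,i) < 0}"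
    unfolding ds by (simp add: length_filter_conv_card, rule arg_cong[where f=card], auto)
  finally show ?thesis .
qed

text \<open>The matrix \<open>M\<close> is necessarily injective, so its image is a \<open>k\<close>-dimensional subspace on
  which the quadratic form of \<open>A\<close> is negative definite.\<close>

definition neg_definite_subspace :: "real mat \<Rightarrow> nat \<Rightarrow> nat \<Rightarrow> bool" where
  "neg_definite_subspace A n k \<longleftrightarrow> (\<exists>M \<in> carrier_mat n k.
     \<forall>c \<in> carrier_vec k. c \<noteq> 0\<^sub>v k \<longrightarrow> (M *\<^sub>v c) \<bullet> (A *\<^sub>v (M *\<^sub>v c)) < 0)"

lemma neg_definite_subspace_congruence:
  assumes A: "A \<in> carrier_mat n n" and S: "S \<in> carrier_mat n m"
    and w: "neg_definite_subspace (transpose_mat S * A * S) m k"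
  shows "neg_definite_subspace A n k"
proof -
  obtain M where M: "M \<in> carrier_mat m k" and neg: "\<And>c. c \<in> carrier_vec k \<Longrightarrow> c \<noteq> 0\<^sub>v k \<Longrightarrow>
     (M *\<^sub>v c) \<bullet> ((transpose_mat S * A * S) *\<^sub>v (M *\<^sub>v c)) < 0"
    using w unfolding neg_definite_subspace_def by blast
  show ?thesis unfolding neg_definite_subspace_def
  proof (intro bexI[of _ "S * M"] ballI impI)
    show "S * M \<in> carrier_mat n k" using S M by auto
    fix c :: "real vec" assume c: "c \<in> carrier_vec k" and c0: "c \<noteq> 0\<^sub>v k"
    define y where "y = M *\<^sub>v c"
    have y: "y \<in> carrier_vec m" using M c unfolding y_def by auto
    have SM: "(S * M) *\<^sub>v c = S *\<^sub>v y" unfolding y_def using S M c by auto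
    have z: "A *\<^sub>v (S *\<^sub>v y) \<in> carrier_vec n" using A S y by auto
    have "(S *\<^sub>v y) \<bullet> (A *\<^sub>v (S *\<^sub>v y)) = (A *\<^sub>v (S *\<^sub>v y)) \<bullet> (S *\<^sub>v y)"
      by (rule comm_scalar_prod[OF _ z], use S y in auto)
    also have "\<dots> = (transpose_mat S *\<^sub>v (A *\<^sub>v (S *\<^sub>v y))) \<bullet> y"
      by (rule transpose_vec_mult_scalar[OF S y z, symmetric])
    also have "\<dots> = y \<bullet> (transpose_mat S *\<^sub>v (A *\<^sub>v (S *\<^sub>v y)))"
      by (rule comm_scalar_prod[OF _ y], use S A y in auto)
    also have "transpose_mat S *\<^sub>v (A *\<^sub>v (S *\<^sub>v y)) = (transpose_mat S * A * S) *\<^sub>v y"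
      using S A y
      by (simp add: assoc_mult_mat_vec[of _ m n _ n] assoc_mult_mat_vec[of _ m n _ m])
    finally show "(S * M *\<^sub>v c) \<bullet> (A *\<^sub>v (S * M *\<^sub>v c)) < 0"
      unfolding SM using neg[OF c c0] unfolding y_def by simp
  qed
qed

lemma quadratic_form_diagonal:
  fixes D :: "real mat"
  assumes D: "D \<in> carrier_mat n n" "diagonal_mat D" and x: "x \<in> carrier_vec n"
  shows "x \<bullet> (D *\<^sub>v x) = (\<Sum>i<n. D $$ (i,i) * (x $ i)\<^sup>2)"
proof -
  have Dx: "(D *\<^sub>v x) $ i = D $$ (i,i) * x $ i" if i: "i < n" for i
  proof -
    have "(D *\<^sub>v x) $ i = (\<Sum>j\<in>{0..<n}. D $$ (i,j) * x $ j)"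
      using D x i by (simp add: scalar_prod_def)
    also have "\<dots> = (\<Sum>j\<in>{0..<n}. if j = i then D $$ (i,i) * x $ i else 0)"
      by (rule sum.cong, use D i in \<open>auto simp: diagonal_mat_def\<close>)
    finally show ?thesis using i by simp
  qed
  have "x \<bullet> (D *\<^sub>v x) = (\<Sum>i\<in>{0..<n}. x $ i * (D *\<^sub>v x) $ i)"
    using x D by (simp add: scalar_prod_def)
  also have "\<dots> = (\<Sum>i<n. D $$ (i,i) * (x $ i)\<^sup>2)"
    by (simp add: atLeast0LessThan Dx power2_eq_square mult_ac)
  finally show ?thesis .
qed

lemma det_zero_row:
  assumes A: "(A :: 'a :: comm_ring_1 mat) \<in> carrier_mat n n" and k: "k < n"
    and z: "\<And>j. j < n \<Longrightarrow> A $$ (k,j) = 0"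
  shows "det A = 0"
proof -
  have "(\<Prod>i = 0..<n. A $$ (i, p i)) = 0" if p: "p permutes {0..<n}" for p
    by (rule prod_zero, use k z p in \<open>auto intro!: bexI[of _ k] simp: permutes_in_image\<close>)
  thus ?thesis unfolding det_def using A by auto
qed

lemma neg_definite_subspace_diagonal_le:
  fixes D :: "real mat"
  assumes D: "D \<in> carrier_mat n n" "diagonal_mat D" and w: "neg_definite_subspace D n k"
  shows "k \<le> card {i. i < n \<and> D $$ (i,i) < 0}"
proof (rule ccontr)
  define N where "N = {i. i < n \<and> D $$ (i,i) < 0}"
  define xs where "xs = sorted_list_of_set N"
  have xs: "distinct xs" "set xs = N" "length xs = card N"
    unfolding xs_def N_def by auto
  have xsn: "xs ! j < n" if "j < card N" for j
    using xs nth_mem[of j xs] that unfolding N_def by auto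
  assume "\<not> k \<le> card {i. i < n \<and> D $$ (i,i) < 0}"
  hence kN: "card N < k" unfolding N_def by simp
  obtain M where M: "M \<in> carrier_mat n k" and neg: "\<And>c. c \<in> carrier_vec k \<Longrightarrow> c \<noteq> 0\<^sub>v k \<Longrightarrow>
      (M *\<^sub>v c) \<bullet> (D *\<^sub>v (M *\<^sub>v c)) < 0"
    using w unfolding neg_definite_subspace_def by blast
  \<comment> \<open>Fewer than \<open>k\<close> linear conditions: some \<open>c \<noteq> 0\<close> makes \<open>M c\<close> vanish on all
    negative coordinates.\<close>
  define R where "R = mat k k (\<lambda>(a,l). if a < card N then M $$ (xs ! a, l) else 0)"
  have R: "R \<in> carrier_mat k k" unfolding R_def by auto
  have "det R = 0"
    by (rule det_zero_row[OF R, of "k - 1"], use kN in \<open>auto simp: R_def\<close>)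
  then obtain c where c: "c \<in> carrier_vec k" "c \<noteq> 0\<^sub>v k" "R *\<^sub>v c = 0\<^sub>v k"
    using det_0_iff_vec_prod_zero_field[OF R] by blast
  define x where "x = M *\<^sub>v c"
  have x: "x \<in> carrier_vec n" unfolding x_def using M c by auto
  have x0: "x $ (xs ! a) = 0" if a: "a < card N" for a
  proof -
    have "(R *\<^sub>v c) $ a = 0" using c a kN by simp
    moreover have "(R *\<^sub>v c) $ a = x $ (xs ! a)"
      unfolding x_def R_def using a kN M c xsn[OF a] by (simp add: scalar_prod_def)
    ultimately show ?thesis by simp
  qed
  have "0 \<le> (\<Sum>i<n. D $$ (i,i) * (x $ i)\<^sup>2)"
  proof (rule sum_nonneg)
    fix i assume i: "i \<in> {..<n}"
    show "0 \<le> D $$ (i,i) * (x $ i)\<^sup>2"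
    proof (cases "i \<in> N")
      case True
      then obtain a where "a < card N" "i = xs ! a" using xs by (metis in_set_conv_nth)
      then show ?thesis using x0 by simp
    next
      case False
      then show ?thesis using i unfolding N_def by auto
    qed
  qed
  also have "\<dots> = x \<bullet> (D *\<^sub>v x)" by (rule quadratic_form_diagonal[OF D x, symmetric])
  finally show False using neg[OF c(1,2)] unfolding x_def by simp
qed

lemma neg_definite_subspace_diagonal:
  fixes D :: "real mat"
  assumes D: "D \<in> carrier_mat n n" "diagonal_mat D" and k: "k \<le> card {i. i < n \<and> D $$ (i,i) < 0}"
  shows "neg_definite_subspace D n k"
proof -
  define N where "N = {i. i < n \<and> D $$ (i,i) < 0}"
  define xs where "xs = sorted_list_of_set N"
  have xs: "distinct xs" "set xs = N" "length xs = card N"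
    unfolding xs_def N_def by auto
  have kN: "k \<le> card N" using k unfolding N_def .
  have xsn: "xs ! j < n \<and> D $$ (xs ! j, xs ! j) < 0" if "j < k" for j
    using xs nth_mem[of j xs] that kN unfolding N_def by auto
  define M where "M = mat n k (\<lambda>(i,j). if i = xs ! j then 1 else (0::real))"
  show ?thesis unfolding neg_definite_subspace_def
  proof (intro bexI[of _ M] ballI impI)
    show "M \<in> carrier_mat n k" unfolding M_def by auto
    fix c :: "real vec" assume c: "c \<in> carrier_vec k" and c0: "c \<noteq> 0\<^sub>v k"
    define x where "x = M *\<^sub>v c"
    have x: "x \<in> carrier_vec n" unfolding x_def M_def by (rule mult_mat_vec_carrier[of _ n k], auto simp: c)
    have inj: "inj_on (\<lambda>j. xs ! j) {..<k}"
      using xs kN by (auto simp: inj_on_def nth_eq_iff_index_eq)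
    have xj: "x $ (xs ! j) = c $ j" if j: "j < k" for j
    proof -
      have "x $ (xs ! j) = (\<Sum>l\<in>{0..<k}. (if xs ! j = xs ! l then 1 else 0) * c $ l)"
        unfolding x_def M_def using xsn[OF j] j c by (simp add: scalar_prod_def)
      also have "\<dots> = (\<Sum>l\<in>{0..<k}. if l = j then c $ j else 0)"
        by (rule sum.cong, use xs kN j in \<open>auto simp: nth_eq_iff_index_eq\<close>)
      finally show ?thesis using j by simp
    qed
    have xo: "x $ i = 0" if "i < n" "i \<notin> (\<lambda>j. xs ! j) ` {..<k}" for i
      unfolding x_def M_def using that c by (auto simp: scalar_prod_def intro!: sum.neutral)
    obtain j0 where j0: "j0 < k" "c $ j0 \<noteq> 0"
      using c c0 by (metis carrier_vecD eq_vecI index_zero_vec(1,2))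
    have "x \<bullet> (D *\<^sub>v x) = (\<Sum>i<n. D $$ (i,i) * (x $ i)\<^sup>2)" by (rule quadratic_form_diagonal[OF D x])
    also have "\<dots> = (\<Sum>i\<in>(\<lambda>j. xs ! j) ` {..<k}. D $$ (i,i) * (x $ i)\<^sup>2)"
      by (rule sum.mono_neutral_right, use xsn xo in auto)
    also have "\<dots> = (\<Sum>j<k. D $$ (xs ! j, xs ! j) * (c $ j)\<^sup>2)"
      by (subst sum.reindex[OF inj], simp add: xj)
    also have "\<dots> < 0"
    proof -
      have "0 < (\<Sum>j<k. - (D $$ (xs ! j, xs ! j) * (c $ j)\<^sup>2))"
        using j0 xsn by (intro sum_pos2[of _ j0])
          (auto simp: mult_neg_pos mult_nonpos_nonneg less_imp_le)
      then show ?thesis by (simp add: sum_negf)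
    qed
    finally show "(M *\<^sub>v c) \<bullet> (D *\<^sub>v (M *\<^sub>v c)) < 0" unfolding x_def .
  qed
qed

theorem neg_definite_subspace_iff_neg_index:
  fixes A :: "real mat"
  assumes A: "A \<in> carrier_mat n n" and sym: "transpose_mat A = A"
  shows "neg_definite_subspace A n k \<longleftrightarrow> k \<le> neg_index A"
proof -
  obtain P D where P: "orthonormal_mat n P" and D: "D \<in> carrier_mat n n" "diagonal_mat D"
    and AD: "A = P * D * transpose_mat P"
    using real_symmetric_orthonormal_diagonalization[OF A sym] by blast
  have Pc: "P \<in> carrier_mat n n" and PTP: "transpose_mat P * P = 1\<^sub>m n"
    using P unfolding orthonormal_mat_def by auto
  have DA: "transpose_mat P * A * P = D"
  proof -
    have "transpose_mat P * A * P = (transpose_mat P * P) * D * (transpose_mat P * P)"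
      unfolding AD using Pc D by (simp add: assoc_mult_mat[of _ n n _ n _ n])
    thus ?thesis using PTP D by simp
  qed
  have "neg_definite_subspace A n k \<longleftrightarrow> neg_definite_subspace D n k"
  proof
    assume "neg_definite_subspace A n k"
    thus "neg_definite_subspace D n k"
      using neg_definite_subspace_congruence[OF D(1), of "transpose_mat P" n k] Pc AD by simp
  next
    assume "neg_definite_subspace D n k"
    thus "neg_definite_subspace A n k" using neg_definite_subspace_congruence[OF A Pc] DA by simp
  qed
  also have "\<dots> \<longleftrightarrow> k \<le> card {i. i < n \<and> D $$ (i,i) < 0}"
    using neg_definite_subspace_diagonal_le[OF D] neg_definite_subspace_diagonal[OF D] by blast
  finally show ?thesis unfolding neg_index_orthonormal_diagonal[OF P D AD] .
qed

section \<open>Negative index of signed graphs\<close>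

definition sign_weight ::
  "(nat \<Rightarrow> nat \<Rightarrow> bool) \<Rightarrow> (nat \<Rightarrow> nat \<Rightarrow> bool) \<Rightarrow> nat \<Rightarrow> nat \<Rightarrow> real" where
  "sign_weight E \<sigma> u v = (if E u v then (if \<sigma> u v then 1 else -1) else 0)"

definition signed_quad_form ::
  "(nat \<Rightarrow> nat \<Rightarrow> bool) \<Rightarrow> (nat \<Rightarrow> nat \<Rightarrow> bool) \<Rightarrow> nat set \<Rightarrow> (nat \<Rightarrow> real) \<Rightarrow> real" where
  "signed_quad_form E \<sigma> V x = (\<Sum>u\<in>V. \<Sum>v\<in>V. sign_weight E \<sigma> u v * x u * x v)"

text \<open>A vertex-function version of \<^const>\<open>neg_definite_subspace\<close>; unlike matrix witnesses,
  its witnesses extend directly from a vertex set to a superset.\<close>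

definition neg_definite_family ::
  "(nat \<Rightarrow> nat \<Rightarrow> bool) \<Rightarrow> (nat \<Rightarrow> nat \<Rightarrow> bool) \<Rightarrow> nat set \<Rightarrow> nat \<Rightarrow> bool" where
  "neg_definite_family E \<sigma> V k \<longleftrightarrow> (\<exists>F. \<forall>c. (\<exists>j<k. c j \<noteq> 0) \<longrightarrow>
     signed_quad_form E \<sigma> V (\<lambda>u. \<Sum>j<k. c j * F j u) < 0)"

lemma sign_weight_sym:
  assumes "signed_graph V E \<sigma>"
  shows "sign_weight E \<sigma> u v = sign_weight E \<sigma> v u"
  using assms unfolding signed_graph_def sign_weight_def by (cases "E u v") auto

lemma sum_sorted_list_of_set:
  assumes "finite V"
  shows "(\<Sum>u\<in>V. f u) = (\<Sum>i<card V. f (sorted_list_of_set V ! i))"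
proof -
  define sl where "sl = sorted_list_of_set V"
  have sl: "distinct sl" "set sl = V" "length sl = card V" unfolding sl_def using assms by auto
  have "inj_on (\<lambda>i. sl ! i) {..<card V}" using sl by (auto simp: inj_on_def nth_eq_iff_index_eq)
  moreover have "(\<lambda>i. sl ! i) ` {..<card V} = V" using sl by (auto simp: in_set_conv_nth)
  ultimately show ?thesis unfolding sl_def[symmetric] by (metis sum.reindex_cong)
qed

lemma adj_mat_quadratic_form:
  assumes fV: "finite V"
  shows "vec (card V) (\<lambda>i. x (sorted_list_of_set V ! i)) \<bullet>
     (adj_mat V E \<sigma> *\<^sub>v vec (card V) (\<lambda>i. x (sorted_list_of_set V ! i))) = signed_quad_form E \<sigma> V x"
proof -
  define sl where "sl = sorted_list_of_set V"
  define n where "n = card V"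
  have "vec n (\<lambda>i. x (sl ! i)) \<bullet> (adj_mat V E \<sigma> *\<^sub>v vec n (\<lambda>i. x (sl ! i)))
     = (\<Sum>i<n. x (sl ! i) * (\<Sum>j<n. sign_weight E \<sigma> (sl ! i) (sl ! j) * x (sl ! j)))"
    unfolding adj_mat_def n_def[symmetric] sl_def[symmetric]
    by (simp add: scalar_prod_def atLeast0LessThan sign_weight_def Let_def)
  also have "\<dots> = (\<Sum>i<n. \<Sum>j<n. sign_weight E \<sigma> (sl ! i) (sl ! j) * x (sl ! i) * x (sl ! j))"
    by (simp add: sum_distrib_left mult_ac)
  also have "\<dots> = signed_quad_form E \<sigma> V x"
    unfolding signed_quad_form_def sum_sorted_list_of_set[OF fV] n_def sl_def ..
  finally show ?thesis unfolding n_def sl_def .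
qed

lemma neg_definite_family_imp_subspace:
  assumes fV: "finite V" and w: "neg_definite_family E \<sigma> V k"
  shows "neg_definite_subspace (adj_mat V E \<sigma>) (card V) k"
proof -
  define sl where "sl = sorted_list_of_set V"
  obtain F where F: "\<And>c. (\<exists>j<k. c j \<noteq> 0) \<Longrightarrow>
      signed_quad_form E \<sigma> V (\<lambda>u. \<Sum>j<k. c j * F j u) < 0"
    using w unfolding neg_definite_family_def by blast
  define M where "M = mat (card V) k (\<lambda>(i,j). F j (sl ! i))"
  show ?thesis unfolding neg_definite_subspace_def
  proof (intro bexI[of _ M] ballI impI)
    show "M \<in> carrier_mat (card V) k" unfolding M_def by auto
    fix c :: "real vec" assume c: "c \<in> carrier_vec k" and c0: "c \<noteq> 0\<^sub>v k"
    define x where "x = (\<lambda>u. \<Sum>j<k. c $ j * F j u)"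
    have Mc: "M *\<^sub>v c = vec (card V) (\<lambda>i. x (sl ! i))"
      unfolding M_def x_def using c
      by (intro eq_vecI, auto simp: scalar_prod_def atLeast0LessThan mult_ac)
    have "\<exists>j<k. c $ j \<noteq> 0" using c c0 by (metis carrier_vecD eq_vecI index_zero_vec(1,2))
    hence "signed_quad_form E \<sigma> V x < 0" unfolding x_def using F[of "\<lambda>j. c $ j"] by simp
    thus "(M *\<^sub>v c) \<bullet> (adj_mat V E \<sigma> *\<^sub>v (M *\<^sub>v c)) < 0"
      unfolding Mc sl_def using adj_mat_quadratic_form[OF fV, of x E \<sigma>] by simp
  qed
qed

lemma neg_definite_subspace_imp_family:
  assumes fV: "finite V" and w: "neg_definite_subspace (adj_mat V E \<sigma>) (card V) k"
  shows "neg_definite_family E \<sigma> V k"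
proof -
  define sl where "sl = sorted_list_of_set V"
  have inj: "inj_on (\<lambda>i. sl ! i) {..<card V}"
    using fV unfolding sl_def by (auto simp: inj_on_def nth_eq_iff_index_eq)
  obtain M where M: "M \<in> carrier_mat (card V) k" and neg: "\<And>c. c \<in> carrier_vec k \<Longrightarrow> c \<noteq> 0\<^sub>v k \<Longrightarrow>
       (M *\<^sub>v c) \<bullet> (adj_mat V E \<sigma> *\<^sub>v (M *\<^sub>v c)) < 0"
    using w unfolding neg_definite_subspace_def by blast
  define F where "F = (\<lambda>j u. M $$ (inv_into {..<card V} (\<lambda>i. sl ! i) u, j))"
  show ?thesis unfolding neg_definite_family_def
  proof (intro exI[of _ F] allI impI)
    fix c :: "nat \<Rightarrow> real" assume cj: "\<exists>j<k. c j \<noteq> 0"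
    define cv where "cv = vec k c"
    have cv: "cv \<in> carrier_vec k" "cv \<noteq> 0\<^sub>v k" using cj unfolding cv_def by (auto simp: vec_eq_iff)
    define x where "x = (\<lambda>u. \<Sum>j<k. c j * F j u)"
    have Mc: "M *\<^sub>v cv = vec (card V) (\<lambda>i. x (sl ! i))"
    proof (rule eq_vecI)
      fix i assume "i < dim_vec (vec (card V) (\<lambda>i. x (sl ! i)))"
      hence i: "i < card V" by simp
      then have "inv_into {..<card V} (\<lambda>i. sl ! i) (sl ! i) = i" using inv_into_f_f[OF inj] by simp
      then show "(M *\<^sub>v cv) $ i = vec (card V) (\<lambda>i. x (sl ! i)) $ i"
        using M i unfolding cv_def x_def F_def by (auto simp: scalar_prod_def atLeast0LessThan mult_ac)
    qed (use M in auto)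
    show "signed_quad_form E \<sigma> V (\<lambda>u. \<Sum>j<k. c j * F j u) < 0"
      using neg[OF cv] adj_mat_quadratic_form[OF fV, of x E \<sigma>]
      unfolding Mc sl_def x_def[symmetric] by simp
  qed
qed

lemma neg_definite_family_iff_i_minus:
  assumes fV: "finite V" and sym: "\<And>u v. sign_weight E \<sigma> u v = sign_weight E \<sigma> v u"
  shows "neg_definite_family E \<sigma> V k \<longleftrightarrow> k \<le> i_minus V E \<sigma>"
proof -
  have A: "adj_mat V E \<sigma> \<in> carrier_mat (card V) (card V)" unfolding adj_mat_def by auto
  have "transpose_mat (adj_mat V E \<sigma>) = adj_mat V E \<sigma>"
    using sym[unfolded sign_weight_def] by (intro eq_matI) (auto simp: adj_mat_def Let_def)
  then show ?thesis
    using neg_definite_subspace_iff_neg_index[OF A] neg_definite_family_imp_subspace[OF fV]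
      neg_definite_subspace_imp_family[OF fV] unfolding i_minus_def by blast
qed

lemma neg_definite_family_mono:
  assumes fV: "finite V" and WV: "W \<subseteq> V" and w: "neg_definite_family E \<sigma> W k"
  shows "neg_definite_family E \<sigma> V k"
proof -
  obtain F where F: "\<And>c. (\<exists>j<k. c j \<noteq> 0) \<Longrightarrow>
      signed_quad_form E \<sigma> W (\<lambda>u. \<Sum>j<k. c j * F j u) < 0"
    using w unfolding neg_definite_family_def by blast
  define F' where "F' = (\<lambda>j u. if u \<in> W then F j u else 0)"
  show ?thesis unfolding neg_definite_family_def
  proof (intro exI[of _ F'] allI impI)
    fix c :: "nat \<Rightarrow> real" assume cj: "\<exists>j<k. c j \<noteq> 0"
    define x where "x = (\<lambda>u. \<Sum>j<k. c j * F j u)"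
    define x' where "x' = (\<lambda>u. if u \<in> W then x u else 0)"
    have x': "(\<lambda>u. \<Sum>j<k. c j * F' j u) = x'"
      unfolding F'_def x_def x'_def by (auto intro!: ext)
    have "signed_quad_form E \<sigma> V x'
        = (\<Sum>u\<in>W. \<Sum>v\<in>V. sign_weight E \<sigma> u v * x' u * x' v)"
      unfolding signed_quad_form_def by (rule sum.mono_neutral_right[OF fV WV]) (auto simp: x'_def)
    also have "\<dots> = (\<Sum>u\<in>W. \<Sum>v\<in>W. sign_weight E \<sigma> u v * x' u * x' v)"
      by (intro sum.cong refl sum.mono_neutral_right[OF fV WV]) (auto simp: x'_def)
    also have "\<dots> = signed_quad_form E \<sigma> W x"
      unfolding signed_quad_form_def by (intro sum.cong refl) (auto simp: x'_def)
    finally show "signed_quad_form E \<sigma> V (\<lambda>u. \<Sum>j<k. c j * F' j u) < 0"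
      using F[OF cj] unfolding x' x_def by simp
  qed
qed

lemma signed_quad_form_insert_pendant:
  assumes fS: "finite S" and aS: "a \<notin> S" and bS: "b \<notin> S" and ab: "a \<noteq> b"
    and irrefl: "\<And>u. \<not> E u u" and na: "\<And>u. u \<in> S \<Longrightarrow> \<not> E a u"
    and sym: "\<And>u v. sign_weight E \<sigma> u v = sign_weight E \<sigma> v u"
  shows "signed_quad_form E \<sigma> (insert a (insert b S)) x = signed_quad_form E \<sigma> S x
     + 2 * sign_weight E \<sigma> a b * x a * x b + 2 * x b * (\<Sum>u\<in>S. sign_weight E \<sigma> b u * x u)"
proof -
  define w where "w = sign_weight E \<sigma>"
  have wa: "w a u = 0" "w u a = 0" if "u \<in> S" for u
    using na[OF that] sym unfolding w_def sign_weight_def by metis+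
  have waa: "w u u = 0" for u using irrefl unfolding w_def sign_weight_def by auto
  have wsym: "w u v = w v u" for u v unfolding w_def by (rule sym)
  have inner: "(\<Sum>v\<in>insert a (insert b S). w u v * x u * x v)
      = w u a * x u * x a + w u b * x u * x b + (\<Sum>v\<in>S. w u v * x u * x v)" for u
    using fS aS bS ab by (simp add: sum.insert)
  have "signed_quad_form E \<sigma> (insert a (insert b S)) x
      = (\<Sum>u\<in>insert a (insert b S).
           w u a * x u * x a + w u b * x u * x b + (\<Sum>v\<in>S. w u v * x u * x v))"
    unfolding signed_quad_form_def w_def[symmetric] inner ..
  also have "\<dots> = (w a a * x a * x a + w a b * x a * x b + (\<Sum>v\<in>S. w a v * x a * x v))
     + (w b a * x b * x a + w b b * x b * x b + (\<Sum>v\<in>S. w b v * x b * x v))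
     + (\<Sum>u\<in>S. w u a * x u * x a + w u b * x u * x b + (\<Sum>v\<in>S. w u v * x u * x v))"
    using fS aS bS ab by (simp add: sum.insert add.assoc)
  also have "(\<Sum>v\<in>S. w a v * x a * x v) = 0" using wa by simp
  also have "(\<Sum>u\<in>S. w u a * x u * x a + w u b * x u * x b + (\<Sum>v\<in>S. w u v * x u * x v))
     = (\<Sum>u\<in>S. w b u * x u * x b) + signed_quad_form E \<sigma> S x"
    unfolding signed_quad_form_def sum.distrib[symmetric] w_def[symmetric]
    by (rule sum.cong) (auto simp: wa wsym[of _ b])
  finally show ?thesis using waa wsym[of b a] unfolding w_def
    by (simp add: sum_distrib_left sum_distrib_right algebra_simps)
qed

lemma neg_definite_family_insert_pendant:
  assumes fS: "finite S" and aS: "a \<notin> S" and bS: "b \<notin> S" and Eab: "E a b"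
    and irrefl: "\<And>u. \<not> E u u" and na: "\<And>u. u \<in> S \<Longrightarrow> \<not> E a u"
    and sym: "\<And>u v. sign_weight E \<sigma> u v = sign_weight E \<sigma> v u"
    and w: "neg_definite_family E \<sigma> S k"
  shows "neg_definite_family E \<sigma> (insert a (insert b S)) (Suc k)"
proof -
  obtain F where F: "\<And>c. (\<exists>j<k. c j \<noteq> 0) \<Longrightarrow>
      signed_quad_form E \<sigma> S (\<lambda>u. \<Sum>j<k. c j * F j u) < 0"
    using w unfolding neg_definite_family_def by blast
  have ab: "a \<noteq> b" using Eab irrefl by auto
  define s where "s = sign_weight E \<sigma> a b"
  have ss: "s * (s * t) = t" for t using Eab unfolding s_def sign_weight_def by auto
  define L where "L = (\<lambda>y. \<Sum>u\<in>S. sign_weight E \<sigma> b u * y u)"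
  \<comment> \<open>The new direction is \<open>b\<close>; the value at \<open>a\<close> is chosen so that all cross terms
    cancel, leaving \<open>Q\<^sub>S(y) - 2 x\<^sub>b\<^sup>2\<close>.\<close>
  define F' where "F' = (\<lambda>j u. if u \<in> S then (if j < k then F j u else 0)
      else if u = b then (if j = k then 1 else 0)
      else if u = a then (if j < k then - s * L (F j) else - s) else 0)"
  show ?thesis unfolding neg_definite_family_def
  proof (intro exI[of _ F'] allI impI)
    fix c :: "nat \<Rightarrow> real" assume cj: "\<exists>j<Suc k. c j \<noteq> 0"
    define y where "y = (\<lambda>u. \<Sum>j<k. c j * F j u)"
    define x where "x = (\<lambda>u. \<Sum>j<Suc k. c j * F' j u)"
    have xS: "x u = y u" if "u \<in> S" for u using that unfolding x_def y_def F'_def by simp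
    have xb: "x b = c k" unfolding x_def F'_def using bS ab by simp
    have Ly: "L y = (\<Sum>j<k. c j * L (F j))"
      unfolding L_def y_def by (simp add: sum_distrib_left sum_distrib_right mult_ac sum.swap[of _ S])
    have xa: "x a = - s * L y - s * c k" unfolding x_def F'_def Ly using aS ab
      by (simp add: sum_distrib_left sum_negf mult_ac)
    have "L x = L y" unfolding L_def by (rule sum.cong) (auto simp: xS)
    moreover have "signed_quad_form E \<sigma> S x = signed_quad_form E \<sigma> S y"
      unfolding signed_quad_form_def by (auto intro!: sum.cong simp: xS)
    ultimately have "signed_quad_form E \<sigma> (insert a (insert b S)) x
        = signed_quad_form E \<sigma> S y + 2 * s * x a * x b + 2 * x b * L y"
      using signed_quad_form_insert_pendant[OF fS aS bS ab irrefl na sym, of x]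
      unfolding s_def L_def by simp
    also have "\<dots> = signed_quad_form E \<sigma> S y - 2 * (c k)\<^sup>2"
      unfolding xa xb by (simp add: algebra_simps power2_eq_square ss)
    also have "\<dots> < 0"
    proof (cases "\<exists>j<k. c j \<noteq> 0")
      case True
      then show ?thesis using F[OF True] unfolding y_def by (smt (verit) zero_le_power2)
    next
      case False
      hence "y = (\<lambda>u. 0)" unfolding y_def by (auto intro!: ext)
      moreover have "c k \<noteq> 0" using cj False less_Suc_eq by auto
      ultimately show ?thesis by (simp add: signed_quad_form_def)
    qed
    finally show "signed_quad_form E \<sigma> (insert a (insert b S)) (\<lambda>u. \<Sum>j<Suc k. c j * F' j u) < 0"
      unfolding x_def .
  qed
qed

lemma i_minus_induced_mono:
  assumes G: "signed_graph V E \<sigma>" and WV: "W \<subseteq> V"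
  shows "i_minus W E \<sigma> \<le> i_minus V E \<sigma>"
proof -
  have fV: "finite V" using G unfolding signed_graph_def by simp
  note iff = neg_definite_family_iff_i_minus[OF _ sign_weight_sym[OF G]]
  have "neg_definite_family E \<sigma> W (i_minus W E \<sigma>)"
    using iff[OF finite_subset[OF WV fV]] by simp
  then show ?thesis using neg_definite_family_mono[OF fV WV] iff[OF fV] by blast
qed

lemma i_minus_insert_pendant:
  assumes G: "signed_graph V E \<sigma>" and SV: "S \<subseteq> V" and Eab: "E a b" and aS: "a \<notin> S"
    and na: "\<And>u. u \<in> S \<Longrightarrow> \<not> E a u"
  shows "Suc (i_minus S E \<sigma>) \<le> i_minus (insert a (insert b S)) E \<sigma>"
proof -
  have fS: "finite S" using G SV finite_subset unfolding signed_graph_def by blast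
  have irrefl: "\<And>u. \<not> E u u" using G unfolding signed_graph_def by simp
  have bS: "b \<notin> S" using na Eab by blast
  have sym: "\<And>u v. sign_weight E \<sigma> u v = sign_weight E \<sigma> v u" using sign_weight_sym[OF G] .
  note iff = neg_definite_family_iff_i_minus[OF _ sym]
  have "neg_definite_family E \<sigma> S (i_minus S E \<sigma>)" using iff[OF fS] by simp
  then have "neg_definite_family E \<sigma> (insert a (insert b S)) (Suc (i_minus S E \<sigma>))"
    using neg_definite_family_insert_pendant[OF fS aS bS Eab irrefl na sym] by blast
  then show ?thesis using iff fS by simp
qed

section \<open>Shortest cycles and distances\<close>

lemma is_cycle_shortcut:
  assumes sym: "\<And>u v. E u v \<Longrightarrow> E v u" and cyc: "is_cycle E cs"
    and ij: "i + 2 \<le> j" "j < length cs" and e: "E (cs ! i) (cs ! j)"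
  shows "is_cycle E (take (j - i + 1) (drop i cs))"
proof -
  define l where "l = j - i + 1"
  define ds where "ds = take l (drop i cs)"
  have edges: "E (cs ! t) (cs ! ((t + 1) mod length cs))" if "t < length cs" for t
    using cyc that unfolding is_cycle_def by auto
  have len: "length ds = l" unfolding ds_def l_def using ij by auto
  have dsn: "ds ! t = cs ! (i + t)" if "t < l" for t using ij that unfolding ds_def l_def by auto
  have "E (ds ! t) (ds ! ((t + 1) mod l))" if t: "t < l" for t
  proof (cases "t + 1 < l")
    case True
    moreover have "i + t + 1 < length cs" using True ij unfolding l_def by auto
    ultimately show ?thesis using t edges[of "i + t"] by (simp add: dsn)
  next
    case False
    then have "t = j - i" "t + 1 = l" using t unfolding l_def by auto
    then show ?thesis using t dsn[of 0] dsn[of t] sym[OF e] ij unfolding l_def by auto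
  qed
  moreover have "distinct ds" unfolding ds_def using cyc unfolding is_cycle_def by simp
  moreover have "l \<ge> 3" using ij unfolding l_def by auto
  ultimately show ?thesis unfolding is_cycle_def len ds_def[symmetric] l_def[symmetric] by simp
qed

lemma shortest_cycle_chord:
  assumes sym: "\<And>u v. E u v \<Longrightarrow> E v u" and sc: "shortest_cycle E cs"
    and ij: "i < j" "j < length cs" and e: "E (cs ! i) (cs ! j)"
  shows "cycle_edge cs (cs ! i) (cs ! j)"
proof -
  define g where "g = length cs"
  have cyc: "is_cycle E cs" and short: "\<And>ds. is_cycle E ds \<Longrightarrow> g \<le> length ds"
    using sc unfolding shortest_cycle_def g_def by auto
  have g3: "g \<ge> 3" using cyc unfolding is_cycle_def g_def by simp
  consider "j = i + 1" | "i = 0" "j = g - 1" | "i + 2 \<le> j" "j - i + 1 < g"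
    using ij g3 unfolding g_def by linarith
  then show ?thesis
  proof cases
    case 1
    then show ?thesis unfolding cycle_edge_def using ij by (intro exI[of _ i]) auto
  next
    case 2
    then have "g - 1 < g" "(g - 1 + 1) mod g = 0" using g3 by auto
    then show ?thesis unfolding cycle_edge_def g_def[symmetric] using 2 by (intro exI[of _ "g - 1"]) simp
  next
    case 3
    then have "is_cycle E (take (j - i + 1) (drop i cs))"
      using is_cycle_shortcut[OF sym cyc _ ij(2) e] by blast
    then show ?thesis using short 3 ij by fastforce
  qed
qed

lemma shortest_cycle_chordless:
  assumes sym: "\<And>u v. E u v \<Longrightarrow> E v u" and irrefl: "\<And>u. \<not> E u u"
    and sc: "shortest_cycle E cs" and u: "u \<in> set cs" and v: "v \<in> set cs"
  shows "E u v \<longleftrightarrow> cycle_edge cs u v"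
proof
  assume e: "E u v"
  obtain i j where i: "i < length cs" "u = cs ! i" and j: "j < length cs" "v = cs ! j"
    using u v by (metis in_set_conv_nth)
  have "i < j \<or> j < i" using e i j irrefl by (metis linorder_neqE_nat)
  then show "cycle_edge cs u v"
  proof
    assume "i < j"
    then show ?thesis using shortest_cycle_chord[OF sym sc _ j(1)] e i j by auto
  next
    assume "j < i"
    then have "cycle_edge cs v u" using shortest_cycle_chord[OF sym sc _ i(1)] sym[OF e] i j by auto
    then show ?thesis unfolding cycle_edge_def by blast
  qed
next
  assume "cycle_edge cs u v"
  then obtain t where t: "t < length cs" and
    h: "(u = cs ! t \<and> v = cs ! ((t + 1) mod length cs)) \<or> (v = cs ! t \<and> u = cs ! ((t + 1) mod length cs))"
    unfolding cycle_edge_def by blast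
  have "E (cs ! t) (cs ! ((t + 1) mod length cs))"
    using sc t unfolding shortest_cycle_def is_cycle_def by auto
  then show "E u v" using h sym by auto
qed

lemma adj_mat_shortest_cycle:
  assumes G: "signed_graph V E \<sigma>" and sc: "shortest_cycle E cs"
  shows "adj_mat (set cs) (cycle_edge cs) \<sigma> = adj_mat (set cs) E \<sigma>"
proof -
  have "cycle_edge cs u v = E u v" if "u \<in> set cs" "v \<in> set cs" for u v
    using shortest_cycle_chordless[OF _ _ sc that] G unfolding signed_graph_def by blast
  moreover have "sorted_list_of_set (set cs) ! i \<in> set cs" if "i < card (set cs)" for i
    using that by (metis nth_mem length_sorted_list_of_set set_sorted_list_of_set finite_set)
  ultimately show ?thesis unfolding adj_mat_def by (intro eq_matI) (auto simp: Let_def)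
qed

lemma is_cycle_set_subset:
  assumes G: "signed_graph V E \<sigma>" and cyc: "is_cycle E cs"
  shows "set cs \<subseteq> V"
proof
  fix u assume "u \<in> set cs"
  then obtain t where t: "t < length cs" "u = cs ! t" by (metis in_set_conv_nth)
  then have "E (cs ! t) (cs ! ((t + 1) mod length cs))" using cyc unfolding is_cycle_def by auto
  then show "u \<in> V" using G t unfolding signed_graph_def by auto
qed

lemma walk_take: "walk E xs \<Longrightarrow> 0 < m \<Longrightarrow> walk E (take m xs)"
  unfolding walk_def by auto

lemma walk_snoc:
  assumes w: "walk E ys" and e: "E (last ys) u"
  shows "walk E (ys @ [u])"
  unfolding walk_def
proof (intro conjI allI impI)
  show "ys @ [u] \<noteq> []" by simp
  fix i assume i: "Suc i < length (ys @ [u])"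
  show "E ((ys @ [u]) ! i) ((ys @ [u]) ! Suc i)"
  proof (cases "Suc i < length ys")
    case True
    then show ?thesis using w unfolding walk_def by (simp add: nth_append)
  next
    case False
    hence "i = length ys - 1" "ys \<noteq> []" using i w unfolding walk_def by auto
    then show ?thesis using e False by (simp add: nth_append last_conv_nth)
  qed
qed

lemma dist_to_set_ge_2_edge:
  assumes d: "dist_to_set_eq E v S r" and r: "r \<ge> 2"
  obtains a b where "E a b" "a \<notin> S" "\<And>u. u \<in> S \<Longrightarrow> \<not> E a u"
proof -
  from d obtain xs where xs: "walk E xs" "length xs = Suc r" "hd xs = v"
    and near: "\<And>k. k < r \<Longrightarrow> \<not> reach_in E k v S"
    unfolding dist_to_set_eq_def reach_in_def by blast
  define a where "a = xs ! (r - 2)"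
  define b where "b = xs ! (r - 1)"
  have "E (xs ! (r - 2)) (xs ! Suc (r - 2))"
    using xs(1,2) r unfolding walk_def by simp
  moreover have "Suc (r - 2) = r - 1" using r by simp
  ultimately have Eab: "E a b" unfolding a_def b_def by simp
  define ys where "ys = take (r - 1) xs"
  have ys_len: "length ys = Suc (r - 2)" using xs r by (simp add: ys_def)
  then have "last ys = ys ! (r - 2)" by (metis diff_Suc_1 last_conv_nth list.size(3) nat.distinct(1))
  then have "last ys = a" using r unfolding ys_def a_def by simp
  then have ys: "walk E ys" "length ys = Suc (r - 2)" "hd ys = v" "last ys = a"
    using xs r ys_len walk_take[OF xs(1), of "r - 1"] by (auto simp: ys_def hd_take)
  have aS: "a \<notin> S"
  proof
    assume "a \<in> S"
    hence "reach_in E (r - 2) v S" unfolding reach_in_def using ys by metis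
    thus False using near[of "r - 2"] r by simp
  qed
  have "\<not> E a u" if u: "u \<in> S" for u
  proof
    assume "E a u"
    then have "walk E (ys @ [u])" using walk_snoc[OF ys(1)] ys(4) by simp
    moreover have "length (ys @ [u]) = Suc (r - 1)" "hd (ys @ [u]) = v" using ys r by (auto simp: hd_append)
    ultimately have "reach_in E (r - 1) v S" unfolding reach_in_def using u by fastforce
    thus False using near[of "r - 1"] r by simp
  qed
  then show ?thesis using that Eab aS by blast
qed

theorem lemma2p7:
  fixes V :: "nat set" and E \<sigma> :: "nat \<Rightarrow> nat \<Rightarrow> bool" and cs :: "nat list"
  assumes "signed_graph V E \<sigma>"
    and "shortest_cycle E cs"
    and "i_minus V E \<sigma> = i_minus (set cs) (cycle_edge cs) \<sigma>"
  shows "\<forall>r::nat. r \<ge> 2 \<longrightarrow> N_r V E cs r = {}"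
proof (intro allI impI)
  fix r :: nat assume r: "r \<ge> 2"
  have G: "signed_graph V E \<sigma>" by fact
  have SV: "set cs \<subseteq> V"
    using is_cycle_set_subset[OF G] assms(2) unfolding shortest_cycle_def by blast
  have eq: "i_minus V E \<sigma> = i_minus (set cs) E \<sigma>"
    using assms(3) adj_mat_shortest_cycle[OF G assms(2)] unfolding i_minus_def by simp
  show "N_r V E cs r = {}"
  proof (rule ccontr)
    assume "N_r V E cs r \<noteq> {}"
    then obtain v where "dist_to_set_eq E v (set cs) r" unfolding N_r_def by auto
    then obtain a b where ab: "E a b" "a \<notin> set cs" "\<And>u. u \<in> set cs \<Longrightarrow> \<not> E a u"
      using dist_to_set_ge_2_edge r by blast
    have "insert a (insert b (set cs)) \<subseteq> V" using SV ab(1) G unfolding signed_graph_def by blast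
    then have "i_minus (insert a (insert b (set cs))) E \<sigma> \<le> i_minus V E \<sigma>"
      by (rule i_minus_induced_mono[OF G])
    moreover have "Suc (i_minus (set cs) E \<sigma>) \<le> i_minus (insert a (insert b (set cs))) E \<sigma>"
      by (rule i_minus_insert_pendant[OF G SV ab])
    ultimately show False using eq by simp
  qed
qed

end
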